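(* Let $n\geq 1$ be an integer and $p$ a prime number. Let $\phi(x)\in \mathbb{Z}[x]$ be a monic polynomial which is irreducible modulo $p$. Let $a_0(x), a_1(x), \dots, a_{n-1}(x)\in \mathbb{Z}[x]$ each have degree less than $\deg \phi(x)$. Let $a_n$ be an integer with $p\nmid a_n$, and let $b_0, b_1, \dots, b_{n-1}$ be integers with $p\mid b_j$ for each $0\leq j\leq n-1$. Then the polynomial $$F(x)= a_{n}\phi(x)^{2n}+\sum_{j=0}^{n-1}b_j a_j(x)\phi(x)^{2j}$$ has no non-constant factor (in $\mathbb{Z}[x]$) of degree less than $\deg \phi(x)$.
   Context: A polynomial in $\mathbb{Z}[x]$ is irreducible modulo a prime $p$ if its reduction modulo $p$ is irreducible in $(\mathbb{Z}/p\mathbb{Z})[x]$. *)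

theory Defs
  imports "Berlekamp_Zassenhaus.Finite_Field" "HOL-Computational_Algebra.Polynomial"
begin

text \<open>Reduction modulo p of an integer polynomial, where p = CARD('p) and
  'p mod_ring is the field Z/pZ.\<close>
definition reduce_mod :: "int poly \<Rightarrow> 'p::prime_card mod_ring poly" where
  "reduce_mod f = map_poly of_int f"

definition irreducible_mod :: "'p::prime_card itself \<Rightarrow> int poly \<Rightarrow> bool" where
  "irreducible_mod _ f \<longleftrightarrow> irreducible (reduce_mod f :: 'p mod_ring poly)"

end

theory Submission
  imports Defs
begin

text \<open>Modulo \<open>p\<close> every \<open>b\<^sub>j\<close> vanishes, so \<open>F\<close> reduces to \<open>a\<^sub>n \<phi>^(2n)\<close> with \<open>a\<^sub>n\<close> a unit.
  Since \<open>deg F \<le> 2n deg \<phi>\<close>, the reduction does not lower the degree of \<open>F\<close>, hence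
  it does not lower the degree of any factor \<open>g\<close> of \<open>F\<close> either. But over the field
  \<open>\<int>/p\<int>\<close> a non-constant divisor of a power of the irreducible \<open>\<phi>\<close> has degree at
  least \<open>deg \<phi>\<close>.\<close>

lemma of_int_mod_ring_eq_0_iff:
  "((of_int x :: 'a :: nontriv mod_ring) = 0) \<longleftrightarrow> int CARD('a) dvd x"
  unfolding of_int_of_int_mod_ring by transfer (simp add: mod_eq_0_iff_dvd)

lemma of_int_poly_smult_plus_sum_of_multiples:
  assumes "\<And>j. j < n \<Longrightarrow> int CARD('a) dvd b j"
  shows "(of_int_poly (smult c f + (\<Sum>j<n. smult (b j) (q j))) :: 'a::prime_card mod_ring poly)
    = smult (of_int c) (of_int_poly f)"
proof -
  have "(of_int_poly (\<Sum>j<n. smult (b j) (q j)) :: 'a mod_ring poly) = 0"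
    unfolding of_int_poly_hom.hom_sum using assms
    by (intro sum.neutral) (simp add: of_int_hom.map_poly_hom_smult of_int_mod_ring_eq_0_iff)
  then show ?thesis by (simp add: of_int_poly_hom.hom_add of_int_hom.map_poly_hom_smult)
qed

lemma degree_mult_power_less:
  fixes a phi :: "'a::comm_semiring_1 poly"
  assumes "degree a < degree phi"
  shows "degree (a * phi ^ k) < Suc k * degree phi"
proof -
  have "degree (phi ^ k) \<le> k * degree phi"
    using degree_power_le by (simp add: mult.commute)
  then have "degree (a * phi ^ k) \<le> degree a + k * degree phi"
    using degree_mult_le[of a "phi ^ k"] by linarith
  with assms show ?thesis by simp
qed

lemma degree_smult_power_plus_sum_le:
  fixes phi :: "'a::comm_semiring_1 poly" and a :: "nat \<Rightarrow> 'a poly"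
  assumes "\<And>j. j < n \<Longrightarrow> degree (a j) < degree phi"
  shows "degree (smult c (phi ^ (2 * n)) + (\<Sum>j<n. smult (b j) (a j * phi ^ (2 * j))))
    \<le> 2 * n * degree phi"
proof -
  have "degree (smult c (phi ^ (2 * n))) \<le> 2 * n * degree phi"
    by (metis degree_power_le degree_smult_le le_trans mult.commute)
  moreover have "degree (\<Sum>j<n. smult (b j) (a j * phi ^ (2 * j))) \<le> 2 * n * degree phi"
  proof (rule degree_sum_le)
    fix j assume "j \<in> {..<n}"
    then have "j < n" by simp
    have "degree (smult (b j) (a j * phi ^ (2 * j))) < Suc (2 * j) * degree phi"
      using degree_smult_le degree_mult_power_less[OF assms[OF \<open>j < n\<close>]] le_less_trans by blast
    also have "\<dots> \<le> 2 * n * degree phi"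
      using \<open>j < n\<close> by (intro mult_right_mono) simp_all
    finally show "degree (smult (b j) (a j * phi ^ (2 * j))) \<le> 2 * n * degree phi" by simp
  qed simp
  ultimately show ?thesis by (meson degree_add_le)
qed

lemma degree_map_poly_factor_eq:
  fixes f :: "'a::idom \<Rightarrow> 'b::idom" and g h :: "'a poly"
  assumes "comm_ring_hom f"
    and nonzero: "map_poly f (g * h) \<noteq> 0"
    and degree_kept: "degree (g * h) \<le> degree (map_poly f (g * h))"
  shows "degree (map_poly f g) = degree g"
proof -
  interpret map_poly_comm_ring_hom f by (rule map_poly_comm_ring_hom.intro) fact
  have image: "map_poly f (g * h) = map_poly f g * map_poly f h" by (rule hom_mult)
  with nonzero have "map_poly f g \<noteq> 0" "map_poly f h \<noteq> 0" by auto
  with image have "degree (map_poly f (g * h)) = degree (map_poly f g) + degree (map_poly f h)"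
    by (simp add: degree_mult_eq)
  moreover from nonzero have "degree (g * h) = degree g + degree h"
    by (intro degree_mult_eq) auto
  moreover have "degree (map_poly f g) \<le> degree g" "degree (map_poly f h) \<le> degree h"
    by (rule degree_map_poly_le)+
  ultimately show ?thesis using degree_kept by linarith
qed

lemma degree_le_of_dvd_irreducible_power:
  fixes phi g :: "'a::field_gcd poly"
  assumes "irreducible phi" and "g dvd phi ^ m" and "0 < degree g"
  shows "degree phi \<le> degree g"
proof -
  have "phi \<noteq> 0" using assms(1) by auto
  then have "g \<noteq> 0" using assms(2) by auto
  moreover have "\<not> is_unit g" using assms(3) by (simp add: is_unit_iff_degree \<open>g \<noteq> 0\<close>)
  ultimately obtain q where "q dvd g" and "prime q"
    using prime_divisor_exists by blast
  then have "q dvd phi"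
    using assms(2) prime_dvd_power dvd_trans by blast
  moreover have "\<not> is_unit q" using \<open>prime q\<close> not_prime_unit by blast
  ultimately have "phi dvd q" using assms(1) by (auto simp: irreducible_altdef)
  then have "degree phi \<le> degree q"
    using \<open>prime q\<close> by (intro dvd_imp_degree_le) auto
  also have "\<dots> \<le> degree g" using \<open>q dvd g\<close> \<open>g \<noteq> 0\<close> by (rule dvd_imp_degree_le)
  finally show ?thesis .
qed

theorem lemma2p3:
  fixes n :: nat and phi :: "int poly" and a :: "nat \<Rightarrow> int poly"
    and an :: int and b :: "nat \<Rightarrow> int"
  assumes "n \<ge> 1"
    and "monic phi"
    and "irreducible_mod TYPE('p::prime_card) phi"
    and "\<And>j. j < n \<Longrightarrow> degree (a j) < degree phi"
    and "\<not> int CARD('p) dvd an"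
    and "\<And>j. j < n \<Longrightarrow> int CARD('p) dvd b j"
  shows "\<not> (\<exists>g :: int poly. g dvd
            (smult an (phi ^ (2 * n)) + (\<Sum>j<n. smult (b j) (a j * phi ^ (2 * j))))
          \<and> 0 < degree g \<and> degree g < degree phi)"
proof
  define F where "F = smult an (phi ^ (2 * n)) + (\<Sum>j<n. smult (b j) (a j * phi ^ (2 * j)))"
  let ?r = "of_int_poly :: int poly \<Rightarrow> 'p mod_ring poly"
  assume "\<exists>g. g dvd F \<and> 0 < degree g \<and> degree g < degree phi"
  then obtain g h where F: "F = g * h" and "0 < degree g" and "degree g < degree phi"
    by (auto elim!: dvdE)
  have irr: "irreducible (?r phi)"
    using assms(3) unfolding irreducible_mod_def reduce_mod_def .
  then have "?r phi \<noteq> 0" by auto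
  have an: "(of_int an :: 'p mod_ring) \<noteq> 0"
    using assms(5) by (simp add: of_int_mod_ring_eq_0_iff)
  have rF: "?r F = smult (of_int an) (?r phi ^ (2 * n))"
    unfolding F_def using assms(6)
    by (simp add: of_int_poly_smult_plus_sum_of_multiples of_int_poly_hom.hom_power)
  have deg_phi: "degree (?r phi) = degree phi"
    using assms(2) by (intro degree_map_poly) auto
  have "degree F \<le> 2 * n * degree phi"
    unfolding F_def using assms(4) by (rule degree_smult_power_plus_sum_le)
  also have "\<dots> = degree (?r F)"
    using \<open>?r phi \<noteq> 0\<close> an by (simp add: rF degree_power_eq deg_phi)
  finally have "degree F \<le> degree (?r F)" .
  moreover have "?r F \<noteq> 0" using \<open>?r phi \<noteq> 0\<close> an by (simp add: rF)
  ultimately have deg_g: "degree (?r g) = degree g"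
    unfolding F by (intro degree_map_poly_factor_eq of_int_hom.comm_ring_hom_axioms)
  have "?r g dvd ?r F" unfolding F by (simp add: of_int_poly_hom.hom_mult)
  then have "?r g dvd ?r phi ^ (2 * n)" using an by (simp add: rF dvd_smult_iff)
  then have "degree (?r phi) \<le> degree (?r g)"
    using \<open>0 < degree g\<close> deg_g by (intro degree_le_of_dvd_irreducible_power[OF irr]) simp_all
  with \<open>degree g < degree phi\<close> show False by (simp add: deg_g deg_phi)
qed

end
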